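(* Assume Assumption A and let $(A_i,\tau_i)_{i=1}^n$ be a solution of system (S) with nonnegative initial data $\varphi_i\in X_\alpha$ satisfying $\int_{-\tau_{i0}}^0 f_i(Z_{i\varphi}(\sigma))\,d\sigma=1$ for all $i=1,\dots,n$. Then for each $i=1,\dots,n$, $\lim_{t\to+\infty}\,[t-\tau_i(t)]=+\infty$.
   Context: For $\alpha>0$, $X_\alpha:=\{\phi\in C((-\infty,0]): e^{-\alpha|\cdot|}\phi(\cdot)\in BUC((-\infty,0])\cap \mathrm{Lip}((-\infty,0])\}$. The $n$-species system (S): for $i=1,\dots,n$, $$A_i'(t)=-\mu_{A_i}A_i(t)+\beta_i e^{-\mu_{J_i}\tau_i(t)}\frac{f_i(Z_i(t))}{f_i(Z_i(t-\tau_i(t)))}A_i(t-\tau_i(t)),\quad t\ge0,$$ $$\int_{t-\tau_i(t)}^{t}f_i(Z_i(\sigma))\,d\sigma=\int_{-\tau_{i0}}^{0}f_i(Z_{i\varphi}(\sigma))\,d\sigma,\quad t\ge0,$$ with $A_i(t)=\varphi_i(t)$ for $t\le0$, $\tau_i(0)=\tau_{i0}\ge0$, where $Z_i(t)=\sum_{j=1}^n\zeta_{ij}A_j(t)$, $Z_{i\varphi}(t)=\sum_{j=1}^n\zeta_{ij}\varphi_j(t)$, $\zeta_{ij}\ge0$. A solution consists of continuous $A_i:\mathbb{R}\to[0,\infty)$, differentiable on $[0,\infty)$, and $\tau_i:[0,\infty)\to[0,\infty)$ satisfying these equations for all $t\ge0$. Assumption A: for each $i$, (i) $\mu_{A_i}>0$,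 $\mu_{J_i}>0$, $\beta_i>0$, $\zeta_{ii}>0$; (ii) $f_i:\mathbb{R}\to(0,\infty)$ is Lipschitz continuous and continuously differentiable with $f_i>0$, $f_i'\le0$ on $\mathbb{R}$, $\lim_{x\to+\infty}f_i(x)=0$, and $\sup_{x\ge0}\frac{f_i(x)}{f_i(cx)}<+\infty$ for every $c\ge1$. *)

theory Defs
  imports "HOL-Analysis.Analysis"
begin

definition X_alpha :: "real \<Rightarrow> (real \<Rightarrow> real) set" where
  "X_alpha \<alpha> = {\<phi>. continuous_on {..0} \<phi> \<and>
      bounded ((\<lambda>t. exp (- \<alpha> * \<bar>t\<bar>) * \<phi> t) ` {..0}) \<and>
      uniformly_continuous_on {..0} (\<lambda>t. exp (- \<alpha> * \<bar>t\<bar>) * \<phi> t) \<and>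
      (\<exists>L. L-lipschitz_on {..0} (\<lambda>t. exp (- \<alpha> * \<bar>t\<bar>) * \<phi> t))}"

definition assumptionA ::
  "nat \<Rightarrow> (nat \<Rightarrow> real) \<Rightarrow> (nat \<Rightarrow> real) \<Rightarrow> (nat \<Rightarrow> real) \<Rightarrow> (nat \<Rightarrow> nat \<Rightarrow> real)
   \<Rightarrow> (nat \<Rightarrow> real \<Rightarrow> real) \<Rightarrow> bool" where
  "assumptionA n muA muJ \<beta> \<zeta> f \<longleftrightarrow>
     (\<forall>i<n. \<forall>j<n. \<zeta> i j \<ge> 0) \<and>
     (\<forall>i<n. muA i > 0 \<and> muJ i > 0 \<and> \<beta> i > 0 \<and> \<zeta> i i > 0 \<and>
        (\<exists>L. L-lipschitz_on UNIV (f i)) \<and>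
        (\<exists>f'. (\<forall>x. (f i has_real_derivative f' x) (at x)) \<and> continuous_on UNIV f' \<and>
              (\<forall>x. f' x \<le> 0)) \<and>
        (\<forall>x. f i x > 0) \<and>
        (f i \<longlongrightarrow> 0) at_top \<and>
        (\<forall>c\<ge>1. bdd_above ((\<lambda>x. f i x / f i (c * x)) ` {0..})))"

definition Zfun :: "nat \<Rightarrow> (nat \<Rightarrow> nat \<Rightarrow> real) \<Rightarrow> (nat \<Rightarrow> real \<Rightarrow> real) \<Rightarrow> nat \<Rightarrow> real \<Rightarrow> real" where
  "Zfun n \<zeta> A i t = (\<Sum>j<n. \<zeta> i j * A j t)"

definition is_solution ::
  "nat \<Rightarrow> (nat \<Rightarrow> real) \<Rightarrow> (nat \<Rightarrow> real) \<Rightarrow> (nat \<Rightarrow> real) \<Rightarrow> (nat \<Rightarrow> nat \<Rightarrow> real)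
   \<Rightarrow> (nat \<Rightarrow> real \<Rightarrow> real) \<Rightarrow> (nat \<Rightarrow> real \<Rightarrow> real) \<Rightarrow> (nat \<Rightarrow> real)
   \<Rightarrow> (nat \<Rightarrow> real \<Rightarrow> real) \<Rightarrow> (nat \<Rightarrow> real \<Rightarrow> real) \<Rightarrow> bool" where
  "is_solution n muA muJ \<beta> \<zeta> f \<phi> \<tau>0 A \<tau> \<longleftrightarrow>
     (\<forall>i<n.
        continuous_on UNIV (A i) \<and> (\<forall>t. A i t \<ge> 0) \<and>
        (\<forall>t\<le>0. A i t = \<phi> i t) \<and>
        \<tau> i 0 = \<tau>0 i \<and> (\<forall>t\<ge>0. \<tau> i t \<ge> 0) \<and>
        (\<forall>t\<ge>0. (A i has_real_derivative
             (- muA i * A i t + \<beta> i * exp (- muJ i * \<tau> i t) *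
                (f i (Zfun n \<zeta> A i t) / f i (Zfun n \<zeta> A i (t - \<tau> i t))) * A i (t - \<tau> i t)))
           (at t within {0..})) \<and>
        (\<forall>t\<ge>0. integral {t - \<tau> i t..t} (\<lambda>\<sigma>. f i (Zfun n \<zeta> A i \<sigma>)) =
                 integral {- \<tau>0 i..0} (\<lambda>\<sigma>. f i (Zfun n \<zeta> \<phi> i \<sigma>))))"

end

theory Submission
  imports Defs
begin

text \<open>For one species write \<open>s t = t - \<tau> t\<close>, so that every window \<open>[s t, t]\<close> carries unit
  mass of \<open>f \<circ> Z\<close>; then \<open>s\<close> is nondecreasing with \<open>s' t = f (Z t) / f (Z (s t))\<close>. Since \<open>A\<close>
  decays at most at rate \<open>\<mu>\<close>, a large value \<open>A (s t)\<close> keeps \<open>Z\<close> large and \<open>f \<circ> Z\<close> small on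
  the whole window, which must therefore be long; so above some threshold \<open>a\<close> for \<open>A (s t)\<close>
  the survival factor \<open>\<beta> * exp (- \<mu>J * (t - s t))\<close> is at most \<open>\<mu> / 2\<close>. This makes
  \<open>A t + \<mu> * M t - \<mu> / 2 * M (s t) - \<beta> * a * s t\<close> nonincreasing, where \<open>M\<close> is a primitive
  of \<open>A\<close>; hence \<open>\<integral>\<^sub>0\<^sup>T A = O(1 + T)\<close> for every species and \<open>\<integral>\<^sub>0\<^sup>T Z = O(1 + T)\<close>.
  As \<open>f\<close> is positive and nonincreasing, \<open>\<integral>\<^sub>0\<^sup>T f \<circ> Z\<close> then grows linearly, and a window of
  unit mass ending at \<open>t\<close> cannot reach back to a fixed point once \<open>t\<close> is large.\<close>

lemma integral_ge_const_mult_length: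
  fixes h :: "real \<Rightarrow> real"
  assumes "continuous_on {x..y} h" and "x \<le> y" and "\<And>z. z \<in> {x..y} \<Longrightarrow> c \<le> h z"
  shows "c * (y - x) \<le> integral {x..y} h"
proof -
  have "integral {x..y} (\<lambda>_. c) \<le> integral {x..y} h"
    using assms by (intro integral_le integrable_continuous_interval) auto
  thus ?thesis using assms(2) by (simp add: mult.commute)
qed

lemma integral_le_const_mult_length:
  fixes h :: "real \<Rightarrow> real"
  assumes "continuous_on {x..y} h" and "x \<le> y" and "\<And>z. z \<in> {x..y} \<Longrightarrow> h z \<le> c"
  shows "integral {x..y} h \<le> c * (y - x)"
proof -
  have "integral {x..y} h \<le> integral {x..y} (\<lambda>_. c)"
    using assms by (intro integral_le integrable_continuous_interval) auto
  thus ?thesis using assms(2) by (simp add: mult.commute)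
qed

lemma integral_pos_of_pos:
  fixes h :: "real \<Rightarrow> real"
  assumes hc: "continuous_on {x..y} h" and hp: "\<And>z. z \<in> {x..y} \<Longrightarrow> 0 < h z" and "x < y"
  shows "0 < integral {x..y} h"
proof -
  obtain z where z: "z \<in> {x..y}" "\<And>w. w \<in> {x..y} \<Longrightarrow> h z \<le> h w"
    using continuous_attains_inf[OF _ _ hc] \<open>x < y\<close> by fastforce
  have "h z * (y - x) \<le> integral {x..y} h"
    using z \<open>x < y\<close> by (intro integral_ge_const_mult_length hc) auto
  moreover have "0 < h z * (y - x)" using hp[OF z(1)] \<open>x < y\<close> by simp
  ultimately show ?thesis by linarith
qed

lemma integral_nonneg_of_nonneg:
  fixes h :: "real \<Rightarrow> real"
  assumes "continuous_on {x..y} h" and "\<And>z. z \<in> {x..y} \<Longrightarrow> 0 \<le> h z"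
  shows "0 \<le> integral {x..y} h"
  using assms by (intro integral_nonneg integrable_continuous_interval) auto

lemma integral_combine_continuous:
  fixes h :: "real \<Rightarrow> real"
  assumes "continuous_on {a..b} h" and "a \<le> c" "c \<le> b"
  shows "integral {a..c} h + integral {c..b} h = integral {a..b} h"
  by (rule Henstock_Kurzweil_Integration.integral_combine)
     (use assms in \<open>auto intro: continuous_on_subset integrable_continuous_interval\<close>)

lemma DERIV_integral_upper:
  fixes h :: "real \<Rightarrow> real"
  assumes "continuous_on {a..} h" and "a < x"
  shows "DERIV (\<lambda>y. integral {a..y} h) x :> h x"
proof -
  have "((\<lambda>y. integral {a..y} h) has_real_derivative h x) (at x within {a..x+1})"
    using assms by (intro integral_has_real_derivative continuous_on_subset[OF assms(1)]) auto
  moreover have "at x within {a..x+1} = at x" using assms by (intro at_within_Icc_at) auto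
  ultimately show ?thesis by simp
qed

lemma exp_decay_lower_bound:
  fixes A :: "real \<Rightarrow> real" and \<mu> :: real
  assumes A: "continuous_on {u..v} A" and "u \<le> v"
    and A': "\<And>t. u < t \<Longrightarrow> t < v \<Longrightarrow> \<exists>d. DERIV A t :> d \<and> - \<mu> * A t \<le> d"
  shows "A u * exp (- \<mu> * (v - u)) \<le> A v"
proof -
  define q where "q x = A x * exp (\<mu> * x)" for x
  have "q u \<le> q v"
  proof (rule DERIV_nonneg_imp_increasing_open[OF \<open>u \<le> v\<close>])
    fix x assume "u < x" "x < v"
    then obtain d where d: "DERIV A x :> d" "- \<mu> * A x \<le> d" using A' by blast
    have "DERIV q x :> d * exp (\<mu> * x) + (exp (\<mu> * x) * \<mu>) * A x"
      unfolding q_def by (rule DERIV_mult[OF d(1) DERIV_chain2[OF DERIV_exp DERIV_cmult_Id]])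
    hence "DERIV q x :> (d + \<mu> * A x) * exp (\<mu> * x)" by (simp add: algebra_simps)
    moreover have "0 \<le> (d + \<mu> * A x) * exp (\<mu> * x)" using d(2) by simp
    ultimately show "\<exists>y. DERIV q x :> y \<and> 0 \<le> y" by blast
  qed (unfold q_def, intro continuous_intros A)
  hence "A u * exp (\<mu> * u) * exp (- \<mu> * v) \<le> A v * exp (\<mu> * v) * exp (- \<mu> * v)"
    unfolding q_def by (intro mult_right_mono) auto
  thus ?thesis by (simp add: mult.assoc exp_add[symmetric] algebra_simps)
qed

text \<open>Carath\'eodory's characterisation of the derivative lets us differentiate
  \<open>G (s y) - G (s t) = G y - G t\<close> without knowing beforehand that \<open>s\<close> is differentiable.\<close>
lemma DERIV_of_increment_preserving:
  fixes G s :: "real \<Rightarrow> real"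
  assumes dG: "DERIV G t :> g1" and dGs: "DERIV G (s t) :> g2" and "g2 \<noteq> 0"
    and s: "isCont s t"
    and ev: "\<forall>\<^sub>F y in nhds t. G (s y) - G (s t) = G y - G t"
  shows "DERIV s t :> g1 / g2"
proof -
  obtain r where r: "\<forall>z. G z - G t = r z * (z - t)" "isCont r t" "r t = g1"
    using dG CARAT_DERIV by blast
  obtain g where g: "\<forall>z. G z - G (s t) = g z * (z - s t)" "isCont g (s t)" "g (s t) = g2"
    using dGs CARAT_DERIV by blast
  have gs: "isCont (\<lambda>y. g (s y)) t" using s g(2) by (rule isCont_o2)
  hence "\<forall>\<^sub>F y in nhds t. g (s y) \<noteq> 0"
    using g(3) \<open>g2 \<noteq> 0\<close> unfolding eventually_nhds_conv_at
    by (simp add: isCont_def tendsto_imp_eventually_ne)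
  define R where "R y = r y / g (s y)" for y
  have "\<forall>\<^sub>F y in nhds t. s y = s t + R y * (y - t)"
    using ev \<open>\<forall>\<^sub>F y in nhds t. g (s y) \<noteq> 0\<close>
  proof eventually_elim
    case (elim y)
    have "g (s y) * (s y - s t) = r y * (y - t)" using elim(1) g(1) r(1) by metis
    then show ?case using elim(2) unfolding R_def by (simp add: field_simps)
  qed
  moreover have "isCont R t" unfolding R_def using r(2) gs g(3) \<open>g2 \<noteq> 0\<close> by (intro isCont_divide) auto
  hence "DERIV (\<lambda>y. s t + R y * (y - t)) t :> R t"
    by (subst CARAT_DERIV) (auto intro!: exI[of _ R])
  moreover have "R t = g1 / g2" using R_def r(3) g(3) by simp
  ultimately show ?thesis using DERIV_cong_ev[of t t s "\<lambda>y. s t + R y * (y - t)"] by auto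
qed

text \<open>In system (S), \<open>h = f\<^sub>i \<circ> Z\<^sub>i\<close>, \<open>s t = t - \<tau>\<^sub>i t\<close> and \<open>r = \<tau>\<^sub>i\<^sub>0\<close>.\<close>
locale unit_window_delay =
  fixes h s :: "real \<Rightarrow> real" and r :: real
  assumes h_cont: "continuous_on UNIV h" and h_pos: "\<And>x. 0 < h x" and r_nonneg: "0 \<le> r"
    and initial_window: "integral {-r..0} h = 1"
    and window: "\<And>t. 0 \<le> t \<Longrightarrow> s t \<le> t \<and> integral {s t..t} h = 1"
begin

lemma h_cont_on: "continuous_on S h"
  using h_cont by (rule continuous_on_subset) simp

lemma delay_ge: "0 \<le> t \<Longrightarrow> -r \<le> s t"
proof (rule ccontr)
  assume t: "0 \<le> t" and "\<not> -r \<le> s t"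
  hence lt: "s t < -r" by simp
  have "integral {s t..-r} h + integral {-r..t} h = integral {s t..t} h"
    using lt r_nonneg t by (intro integral_combine_continuous h_cont_on) auto
  moreover have "integral {-r..0} h + integral {0..t} h = integral {-r..t} h"
    using r_nonneg t by (intro integral_combine_continuous h_cont_on) auto
  moreover have "0 \<le> integral {0..t} h"
    using h_pos by (intro integral_nonneg_of_nonneg h_cont_on less_imp_le)
  moreover have "0 < integral {s t..-r} h" using lt by (intro integral_pos_of_pos h_cont_on h_pos)
  ultimately show False using window[OF t] initial_window by linarith
qed

definition primitive :: "real \<Rightarrow> real"
  where "primitive x = integral {-r-1..x} h"

lemma primitive_diff: "-r-1 \<le> u \<Longrightarrow> u \<le> v \<Longrightarrow> primitive v - primitive u = integral {u..v} h"
  using integral_combine_continuous[OF h_cont_on, of "-r-1" u v] unfolding primitive_def by linarith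

lemma primitive_window: "0 \<le> t \<Longrightarrow> primitive t - primitive (s t) = 1"
  using primitive_diff[of "s t" t] delay_ge[of t] window[of t] by auto

lemma DERIV_primitive: "-r-1 < x \<Longrightarrow> DERIV primitive x :> h x"
  unfolding primitive_def[abs_def] by (rule DERIV_integral_upper[OF h_cont_on])

lemma primitive_strict_mono: "-r-1 \<le> u \<Longrightarrow> u < v \<Longrightarrow> primitive u < primitive v"
  using primitive_diff[of u v] integral_pos_of_pos[OF h_cont_on h_pos, of u v] by simp

lemma delay_mono:
  assumes "0 \<le> u" "u \<le> v"
  shows "s u \<le> s v"
proof (rule ccontr)
  assume "\<not> s u \<le> s v"
  hence "primitive (s v) < primitive (s u)"
    using delay_ge[of v] assms by (intro primitive_strict_mono) auto
  moreover have "primitive u \<le> primitive v"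
    using assms primitive_strict_mono[of u v] r_nonneg by (cases "u = v") auto
  ultimately show False using primitive_window[of u] primitive_window[of v] assms by linarith
qed

lemma delay_lipschitz: "\<exists>L. L-lipschitz_on {0..T} s"
proof (cases "0 \<le> T")
  case False thus ?thesis by (auto simp: lipschitz_on_def)
next
  case True
  obtain m where m: "0 < m" "\<And>z. z \<in> {-r..T} \<Longrightarrow> m \<le> h z"
    using continuous_attains_inf[OF _ _ h_cont_on, of "{-r..T}"] True r_nonneg h_pos
    by (metis atLeastAtMost_iff compact_Icc empty_iff neg_le_0_iff_le order_trans)
  obtain M where M: "\<And>z. z \<in> {0..T} \<Longrightarrow> h z \<le> M"
    using continuous_attains_sup[OF _ _ h_cont_on, of "{0..T}"] True
    by (metis atLeastAtMost_iff compact_Icc empty_iff order_refl)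
  have "\<bar>s v - s u\<bar> \<le> M / m * \<bar>v - u\<bar>" if uv: "u \<in> {0..T}" "v \<in> {0..T}" "u \<le> v" for u v
  proof -
    have "m * (s v - s u) \<le> integral {s u..s v} h"
      using uv m delay_ge[of u] delay_mono[of u v] window[of v]
      by (intro integral_ge_const_mult_length h_cont_on) auto
    also have "\<dots> = integral {u..v} h"
      using primitive_diff[of "s u" "s v"] primitive_diff[of u v] primitive_window[of u]
        primitive_window[of v] delay_ge[of u] delay_mono[of u v] uv r_nonneg by auto
    also have "\<dots> \<le> M * (v - u)"
      using uv M by (intro integral_le_const_mult_length h_cont_on) auto
    finally show ?thesis using m(1) delay_mono[of u v] uv by (simp add: field_simps)
  qed
  hence "dist (s u) (s v) \<le> M / m * dist u v" if "u \<in> {0..T}" "v \<in> {0..T}" for u v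
    using that by (cases "u \<le> v") (force simp: dist_real_def abs_minus_commute)+
  moreover have "0 \<le> M / m" using M[of 0] h_pos[of 0] True m(1) by simp
  ultimately show ?thesis by (blast intro: lipschitz_onI)
qed

lemma continuous_on_delay: "continuous_on {0..T} s"
  using delay_lipschitz lipschitz_on_continuous_on by blast

lemma DERIV_delay:
  assumes t: "0 < t"
  shows "DERIV s t :> h t / h (s t)"
proof (rule DERIV_of_increment_preserving)
  show "DERIV primitive t :> h t" using t r_nonneg by (intro DERIV_primitive) simp
  show "DERIV primitive (s t) :> h (s t)" using t delay_ge[of t] by (intro DERIV_primitive) simp
  show "h (s t) \<noteq> 0" using h_pos[of "s t"] by simp
  show "isCont s t"
    using t by (intro continuous_on_interior[OF continuous_on_delay[of "t + 1"]]) auto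
  have "\<forall>\<^sub>F y in nhds t. 0 < y" using t by (intro eventually_nhds_in_open[of "{0<..}", simplified]) auto
  thus "\<forall>\<^sub>F y in nhds t. primitive (s y) - primitive (s t) = primitive y - primitive t"
    by eventually_elim (use primitive_window t in \<open>smt (verit)\<close>)
qed

end

text \<open>One equation of (S): \<open>A = A\<^sub>i\<close>, \<open>Z = Z\<^sub>i\<close>, \<open>\<mu> = \<mu>\<^sub>A\<^sub>i\<close>, \<open>\<mu>J = \<mu>\<^sub>J\<^sub>i\<close>, \<open>\<kappa> = \<zeta>\<^sub>i\<^sub>i\<close>;
  the other species only enter through \<open>Z \<ge> \<kappa> A\<close>.\<close>
locale species = unit_window_delay "\<lambda>\<sigma>. f (Z \<sigma>)" s r for f Z s :: "real \<Rightarrow> real" and r :: real +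
  fixes A :: "real \<Rightarrow> real" and \<mu> \<beta> \<mu>J \<kappa> :: real
  assumes f_tendsto: "(f \<longlongrightarrow> 0) at_top"
    and Z_ge: "\<And>\<sigma>. \<kappa> * A \<sigma> \<le> Z \<sigma>" and \<kappa>_pos: "0 < \<kappa>"
    and A_cont: "continuous_on UNIV A" and A_nonneg: "\<And>x. 0 \<le> A x"
    and A_deriv: "\<And>t. 0 < t \<Longrightarrow> DERIV A t :>
        - \<mu> * A t + \<beta> * exp (- \<mu>J * (t - s t)) * (f (Z t) / f (Z (s t))) * A (s t)"
    and \<mu>_pos: "0 < \<mu>" and \<beta>_pos: "0 < \<beta>" and \<mu>J_pos: "0 < \<mu>J"
begin

lemma A_cont_on: "continuous_on S A"
  using A_cont by (rule continuous_on_subset) simp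

lemma A_deriv_ge:
  assumes "0 < t"
  shows "\<exists>d. DERIV A t :> d \<and> - \<mu> * A t \<le> d"
proof -
  have "0 \<le> \<beta> * exp (- \<mu>J * (t - s t)) * (f (Z t) / f (Z (s t))) * A (s t)"
    using h_pos[of t] h_pos[of "s t"] \<beta>_pos A_nonneg[of "s t"] by simp
  thus ?thesis using A_deriv[OF assms] by force
qed

lemma delay_long_if_large:
  assumes T: "0 < T"
  shows "\<exists>a\<ge>0. \<forall>t\<ge>0. a \<le> A (s t) \<longrightarrow> T \<le> t - s t"
proof -
  obtain X where X: "\<And>x. X \<le> x \<Longrightarrow> f x < 1 / T"
    using order_tendstoD(2)[OF f_tendsto, of "1 / T"] T unfolding eventually_at_top_linorder by auto
  obtain B where B: "\<And>x. x \<in> {-r..0} \<Longrightarrow> A x \<le> B"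
    using continuous_attains_sup[OF _ _ A_cont_on, of "{-r..0}"] r_nonneg
    by (metis atLeastAtMost_iff compact_Icc empty_iff neg_le_0_iff_le order_refl)
  define a where "a = max (max B 0 + 1) (max X 0 * exp (\<mu> * T) / \<kappa>)"
  have "T \<le> t - s t" if t: "0 \<le> t" and large: "a \<le> A (s t)" for t
  proof (rule ccontr)
    assume "\<not> T \<le> t - s t"
    have "0 < s t"
      using B[of "s t"] delay_ge[OF t] large unfolding a_def by fastforce
    have "f (Z \<sigma>) \<le> 1 / T" if \<sigma>: "\<sigma> \<in> {s t..t}" for \<sigma>
    proof -
      have "a * exp (- \<mu> * T) \<le> A (s t) * exp (- \<mu> * (\<sigma> - s t))"
        using \<sigma> \<open>\<not> T \<le> t - s t\<close> \<mu>_pos large A_nonneg unfolding a_def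
        by (intro mult_mono) auto
      also have "\<dots> \<le> A \<sigma>"
        using \<sigma> \<open>0 < s t\<close> A_deriv_ge by (intro exp_decay_lower_bound A_cont_on) auto
      finally have "\<kappa> * (a * exp (- \<mu> * T)) \<le> Z \<sigma>"
        using Z_ge[of \<sigma>] \<kappa>_pos by (smt (verit) mult_left_mono)
      moreover have "max X 0 \<le> \<kappa> * (a * exp (- \<mu> * T))"
      proof -
        have "max X 0 * exp (\<mu> * T) / \<kappa> \<le> a" unfolding a_def by simp
        hence "max X 0 * exp (\<mu> * T) * exp (- \<mu> * T) \<le> \<kappa> * a * exp (- \<mu> * T)"
          using \<kappa>_pos by (intro mult_right_mono) (auto simp: field_simps)
        thus ?thesis by (simp add: mult.assoc exp_add[symmetric])
      qed
      ultimately show ?thesis using X[of "Z \<sigma>"] by simp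
    qed
    hence "integral {s t..t} (\<lambda>\<sigma>. f (Z \<sigma>)) \<le> 1 / T * (t - s t)"
      using window[OF t] by (intro integral_le_const_mult_length h_cont_on) auto
    also have "\<dots> < 1" using \<open>\<not> T \<le> t - s t\<close> T by (simp add: field_simps)
    finally show False using window[OF t] by simp
  qed
  moreover have "0 \<le> a" unfolding a_def by simp
  ultimately show ?thesis by blast
qed

lemma birth_factor_le_half_if_large: "\<exists>a\<ge>0. \<forall>t\<ge>0. a \<le> A (s t) \<longrightarrow> \<beta> * exp (- \<mu>J * (t - s t)) \<le> \<mu> / 2"
proof -
  define T where "T = max 1 (ln (2 * \<beta> / \<mu>) / \<mu>J)"
  have "\<beta> * exp (- \<mu>J * \<tau>) \<le> \<mu> / 2" if "T \<le> \<tau>" for \<tau>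
  proof -
    have "ln (2 * \<beta> / \<mu>) \<le> \<mu>J * \<tau>"
      using that \<mu>J_pos unfolding T_def by (simp add: pos_divide_le_eq mult.commute)
    hence "exp (- \<mu>J * \<tau>) \<le> exp (- ln (2 * \<beta> / \<mu>))" by simp
    also have "\<dots> = \<mu> / (2 * \<beta>)" using \<beta>_pos \<mu>_pos by (simp add: exp_minus)
    finally show ?thesis using \<beta>_pos by (simp add: field_simps)
  qed
  moreover have "0 < T" unfolding T_def by simp
  then obtain a where "0 \<le> a" "\<forall>t\<ge>0. a \<le> A (s t) \<longrightarrow> T \<le> t - s t"
    using delay_long_if_large by blast
  ultimately show ?thesis by blast
qed

definition mass :: "real \<Rightarrow> real"
  where "mass x = integral {-r-1..x} A"

lemma mass_diff: "-r-1 \<le> u \<Longrightarrow> u \<le> v \<Longrightarrow> mass v - mass u = integral {u..v} A"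
  using integral_combine_continuous[OF A_cont_on, of "-r-1" u v] unfolding mass_def by linarith

lemma DERIV_mass: "-r-1 < x \<Longrightarrow> DERIV mass x :> A x"
  unfolding mass_def[abs_def] by (rule DERIV_integral_upper[OF A_cont_on])

lemma continuous_on_mass: "continuous_on {-r-1<..} mass"
  using DERIV_mass by (intro continuous_at_imp_continuous_on ballI DERIV_isCont) auto

definition lyapunov :: "real \<Rightarrow> real \<Rightarrow> real"
  where "lyapunov a t = A t + \<mu> * mass t - \<mu> / 2 * mass (s t) - \<beta> * a * s t"

text \<open>The derivative of \<open>lyapunov a\<close> is \<open>s' t * (\<beta> * exp (- \<mu>J * (t - s t)) - \<mu> / 2) * A (s t)
  - s' t * \<beta> * a\<close>: the delayed births are absorbed by the \<open>\<mu> / 2\<close>-term when \<open>A (s t) \<ge> a\<close>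
  and by the \<open>\<beta> * a\<close>-term otherwise.\<close>
lemma lyapunov_antimono:
  assumes a: "0 \<le> a" "\<And>t. 0 \<le> t \<Longrightarrow> a \<le> A (s t) \<Longrightarrow> \<beta> * exp (- \<mu>J * (t - s t)) \<le> \<mu> / 2"
    and T: "0 \<le> T"
  shows "lyapunov a T \<le> lyapunov a 0"
proof (rule DERIV_nonpos_imp_decreasing_open[OF T])
  fix x assume x: "0 < x" "x < T"
  define q where "q = f (Z x) / f (Z (s x))"
  define e where "e = exp (- \<mu>J * (x - s x))"
  have sx: "-r \<le> s x" "s x \<le> x" using delay_ge[of x] window[of x] x by auto
  have "DERIV (lyapunov a) x :> (- \<mu> * A x + \<beta> * e * q * A (s x)) + \<mu> * A x
            - \<mu> / 2 * (A (s x) * q) - \<beta> * a * q" (is "DERIV _ x :> ?d")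
    unfolding lyapunov_def[abs_def] e_def q_def
    using x sx r_nonneg
    by (intro DERIV_diff DERIV_add DERIV_cmult A_deriv DERIV_mass DERIV_delay
        DERIV_chain2[of mass, OF DERIV_mass]) auto
  moreover have "\<beta> * e * A (s x) - \<mu> / 2 * A (s x) - \<beta> * a \<le> 0"
  proof (cases "a \<le> A (s x)")
    case True
    hence "\<beta> * e \<le> \<mu> / 2" using a(2)[of x] x unfolding e_def by auto
    thus ?thesis using A_nonneg[of "s x"] \<beta>_pos a(1) by (smt (verit) mult_right_mono mult_nonneg_nonneg)
  next
    case False
    have "e \<le> 1" unfolding e_def using sx \<mu>J_pos by simp
    hence "\<beta> * e * A (s x) \<le> \<beta> * 1 * a"
      using False \<beta>_pos A_nonneg[of "s x"] by (intro mult_mono) (auto simp: e_def)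
    moreover have "0 \<le> \<mu> / 2 * A (s x)" using \<mu>_pos A_nonneg[of "s x"] by simp
    ultimately show ?thesis by simp
  qed
  moreover have "0 < q" unfolding q_def using h_pos by simp
  moreover have "?d = q * (\<beta> * e * A (s x) - \<mu> / 2 * A (s x) - \<beta> * a)"
    by (simp add: algebra_simps)
  ultimately show "\<exists>y. DERIV (lyapunov a) x :> y \<and> y \<le> 0"
    by (metis less_imp_le mult_nonneg_nonpos)
next
  have "s ` {0..T} \<subseteq> {-r-1<..}" using delay_ge by force
  hence "continuous_on {0..T} (\<lambda>t. mass (s t))"
    by (rule continuous_on_compose2[OF continuous_on_mass continuous_on_delay])
  moreover have "continuous_on {0..T} mass"
    using r_nonneg by (intro continuous_on_subset[OF continuous_on_mass]) auto
  ultimately show "continuous_on {0..T} (lyapunov a)" unfolding lyapunov_def[abs_def]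
    by (intro continuous_intros A_cont_on continuous_on_delay)
qed

lemma integral_linear_bound: "\<exists>C. \<forall>T\<ge>0. integral {0..T} A \<le> C * (1 + T)"
proof -
  obtain a where a: "0 \<le> a" "\<And>t. 0 \<le> t \<Longrightarrow> a \<le> A (s t) \<Longrightarrow> \<beta> * exp (- \<mu>J * (t - s t)) \<le> \<mu> / 2"
    using birth_factor_le_half_if_large by blast
  define C where "C = 2 / \<mu> * (\<bar>lyapunov a 0\<bar> + \<beta> * a)"
  have "integral {0..T} A \<le> C * (1 + T)" if T: "0 \<le> T" for T
  proof -
    have sT: "-r \<le> s T" "s T \<le> T" using delay_ge[OF T] window[OF T] by auto
    have "\<mu> / 2 * integral {0..T} A = \<mu> / 2 * mass T - \<mu> / 2 * mass 0"
      using mass_diff[of 0 T] T r_nonneg by (simp flip: right_diff_distrib)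
    moreover have "0 \<le> \<mu> / 2 * mass 0"
      unfolding mass_def using \<mu>_pos by (simp add: integral_nonneg_of_nonneg A_cont_on A_nonneg)
    moreover have "\<mu> / 2 * mass (s T) \<le> \<mu> / 2 * mass T"
      using mass_diff[of "s T" T] sT integral_nonneg_of_nonneg[OF A_cont_on A_nonneg, of "s T" T] \<mu>_pos
      by simp
    moreover have "\<beta> * a * s T \<le> \<beta> * a * T" using sT \<beta>_pos a(1) by (intro mult_left_mono) auto
    moreover have "lyapunov a T \<le> lyapunov a 0" by (rule lyapunov_antimono[OF a T])
    ultimately have "\<mu> / 2 * integral {0..T} A \<le> lyapunov a 0 + \<beta> * a * T"
      using A_nonneg[of T] unfolding lyapunov_def[of a T] by linarith
    also have "\<dots> \<le> (\<bar>lyapunov a 0\<bar> + \<beta> * a) * (1 + T)"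
    proof -
      have "0 \<le> \<beta> * a" "0 \<le> T * \<bar>lyapunov a 0\<bar>" using T \<beta>_pos a(1) by auto
      thus ?thesis by (simp add: algebra_simps)
    qed
    finally show ?thesis using \<mu>_pos unfolding C_def by (simp add: field_simps)
  qed
  thus ?thesis by blast
qed

end

text \<open>Pointwise \<open>f (Z \<sigma>) \<ge> f K * (1 - Z \<sigma> / K)\<close>, so a linear bound on \<open>\<integral> Z\<close> with slope
  below \<open>K / 2\<close> leaves \<open>\<integral> f \<circ> Z\<close> growing at least like \<open>f K * T / 2\<close>.\<close>
lemma filterlim_integral_antimono_comp:
  fixes f Z :: "real \<Rightarrow> real" and C :: real
  assumes f_cont: "continuous_on UNIV f" and f_antimono: "\<And>x y. x \<le> y \<Longrightarrow> f y \<le> f x"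
    and f_pos: "\<And>x. 0 < f x"
    and Z_cont: "continuous_on UNIV Z" and Z_nonneg: "\<And>x. 0 \<le> Z x"
    and Z_int: "\<And>T. 0 \<le> T \<Longrightarrow> integral {0..T} Z \<le> C * (1 + T)"
  shows "filterlim (\<lambda>T. integral {0..T} (\<lambda>\<sigma>. f (Z \<sigma>))) at_top at_top"
proof -
  define K where "K = 2 * \<bar>C\<bar> + 1"
  have K: "0 < K" unfolding K_def by simp
  have fK: "0 < f K" by (rule f_pos)
  have lower: "f K / 2 * (T - 1) \<le> integral {0..T} (\<lambda>\<sigma>. f (Z \<sigma>))" if T: "0 \<le> T" for T
  proof -
    have pointwise: "f K - f K / K * Z \<sigma> \<le> f (Z \<sigma>)" for \<sigma>
    proof (cases "Z \<sigma> \<le> K")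
      case True
      moreover have "0 \<le> f K / K * Z \<sigma>" using fK K Z_nonneg[of \<sigma>] by simp
      ultimately show ?thesis using f_antimono[OF True] by linarith
    next
      case False
      hence "f K / K * K \<le> f K / K * Z \<sigma>" using fK K by (intro mult_left_mono) auto
      thus ?thesis using K f_pos[of "Z \<sigma>"] by simp
    qed
    have Z_int_on: "Z integrable_on {0..T}"
      by (intro integrable_continuous_interval continuous_on_subset[OF Z_cont]) auto
    have "f K * T - f K / K * integral {0..T} Z = integral {0..T} (\<lambda>\<sigma>. f K - f K / K * Z \<sigma>)"
    proof -
      have "integral {0..T} (\<lambda>\<sigma>. f K - f K / K * Z \<sigma>)
          = integral {0..T} (\<lambda>_. f K) - integral {0..T} (\<lambda>\<sigma>. f K / K * Z \<sigma>)"
        using integrable_on_cmult_left[OF Z_int_on, of "f K / K"] by (intro integral_diff) auto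
      thus ?thesis using T by simp
    qed
    also have "\<dots> \<le> integral {0..T} (\<lambda>\<sigma>. f (Z \<sigma>))"
    proof (intro integral_le integrable_continuous_interval)
      show "continuous_on {0..T} (\<lambda>\<sigma>. f (Z \<sigma>))"
        using continuous_on_compose2[OF f_cont Z_cont] by (rule continuous_on_subset) auto
      show "continuous_on {0..T} (\<lambda>\<sigma>. f K - f K / K * Z \<sigma>)"
        using Z_cont by (intro continuous_intros) (auto intro: continuous_on_subset)
    qed (use pointwise in auto)
    finally have "f K * T - f K / K * integral {0..T} Z \<le> integral {0..T} (\<lambda>\<sigma>. f (Z \<sigma>))" .
    moreover have "integral {0..T} Z \<le> \<bar>C\<bar> * (1 + T)"
      using Z_int[OF T] T by (smt (verit) abs_ge_self mult_right_mono)
    hence "f K / K * integral {0..T} Z \<le> f K / K * (\<bar>C\<bar> * (1 + T))"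
      using fK K by (intro mult_left_mono) auto
    moreover have "f K / K * (\<bar>C\<bar> * (1 + T)) \<le> f K / 2 * (1 + T)"
      using fK K T unfolding K_def by (simp add: field_simps)
    moreover have "f K / 2 * (T - 1) = f K * T - f K / 2 * (1 + T)" by (simp add: field_simps)
    ultimately show ?thesis by linarith
  qed
  have "filterlim (\<lambda>T. f K / 2 * (- 1 + T)) at_top at_top"
    using fK by (intro filterlim_tendsto_pos_mult_at_top[OF tendsto_const]
        filterlim_tendsto_add_at_top[OF tendsto_const filterlim_ident]) auto
  moreover have "\<forall>\<^sub>F T in at_top. f K / 2 * (- 1 + T) \<le> integral {0..T} (\<lambda>\<sigma>. f (Z \<sigma>))"
    using eventually_ge_at_top[of 0] by (rule eventually_mono) (use lower in simp)
  ultimately show ?thesis by (rule filterlim_at_top_mono)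
qed

lemma filterlim_window_start:
  fixes h s :: "real \<Rightarrow> real"
  assumes h_cont: "continuous_on UNIV h" and h_nonneg: "\<And>x. 0 \<le> h x"
    and h_int: "filterlim (\<lambda>T. integral {0..T} h) at_top at_top"
    and window: "\<And>t. 0 \<le> t \<Longrightarrow> s t \<le> t \<and> integral {s t..t} h = 1"
  shows "filterlim s at_top at_top"
  unfolding filterlim_at_top
proof
  fix M :: real
  define M' where "M' = max M 0"
  have "\<forall>\<^sub>F t in at_top. integral {0..M'} h + 2 \<le> integral {0..t} h \<and> M' \<le> t"
    using h_int[unfolded filterlim_at_top] eventually_ge_at_top by (intro eventually_conj) auto
  thus "\<forall>\<^sub>F t in at_top. M \<le> s t"
  proof eventually_elim
    case (elim t)
    have h_cont_on: "continuous_on S h" for S using h_cont by (rule continuous_on_subset) simp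
    have "0 \<le> t" "0 \<le> M'" using elim unfolding M'_def by auto
    show ?case
    proof (rule ccontr)
      assume "\<not> M \<le> s t"
      hence "integral {s t..M'} h + integral {M'..t} h = integral {s t..t} h"
        using elim unfolding M'_def by (intro integral_combine_continuous h_cont_on) auto
      moreover have "integral {0..M'} h + integral {M'..t} h = integral {0..t} h"
        using elim \<open>0 \<le> M'\<close> by (intro integral_combine_continuous h_cont_on) auto
      moreover have "0 \<le> integral {s t..M'} h"
        by (intro integral_nonneg_of_nonneg h_cont_on h_nonneg)
      ultimately show False using elim window[OF \<open>0 \<le> t\<close>] by linarith
    qed
  qed
qed

lemma assumptionA_continuous: "assumptionA n muA muJ \<beta> \<zeta> f \<Longrightarrow> i < n \<Longrightarrow> continuous_on UNIV (f i)"
  unfolding assumptionA_def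
  by (metis DERIV_isCont continuous_at_imp_continuous_on)

lemma assumptionA_antimono:
  assumes "assumptionA n muA muJ \<beta> \<zeta> f" "i < n" "x \<le> y"
  shows "f i y \<le> f i x"
proof -
  obtain f' where "\<forall>x. (f i has_real_derivative f' x) (at x)" "\<forall>x. f' x \<le> 0"
    using assms(1,2) unfolding assumptionA_def by blast
  thus ?thesis
    using assumptionA_continuous[OF assms(1,2)]
    by (intro DERIV_nonpos_imp_decreasing_open[OF assms(3)]) (auto intro: continuous_on_subset)
qed

lemma continuous_on_Zfun:
  "(\<And>j. j < n \<Longrightarrow> continuous_on S (A j)) \<Longrightarrow> continuous_on S (Zfun n \<zeta> A i)"
  unfolding Zfun_def[abs_def] by (intro continuous_intros) auto

lemma Zfun_ge_diagonal:
  assumes "\<And>j. j < n \<Longrightarrow> 0 \<le> \<zeta> i j" "\<And>j. j < n \<Longrightarrow> 0 \<le> A j \<sigma>" "i < n"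
  shows "\<zeta> i i * A i \<sigma> \<le> Zfun n \<zeta> A i \<sigma>"
  unfolding Zfun_def using assms by (intro member_le_sum[where f="\<lambda>k. \<zeta> i k * A k \<sigma>"]) auto

lemma Zfun_nonneg:
  assumes "\<And>j. j < n \<Longrightarrow> 0 \<le> \<zeta> i j" "\<And>j. j < n \<Longrightarrow> 0 \<le> A j \<sigma>"
  shows "0 \<le> Zfun n \<zeta> A i \<sigma>"
  unfolding Zfun_def using assms by (intro sum_nonneg) auto

lemma integral_Zfun_le:
  assumes "\<And>j. j < n \<Longrightarrow> continuous_on {a..b} (A j)" and "\<And>j. j < n \<Longrightarrow> 0 \<le> \<zeta> i j"
    and "\<And>j. j < n \<Longrightarrow> integral {a..b} (A j) \<le> c j"
  shows "integral {a..b} (Zfun n \<zeta> A i) \<le> (\<Sum>j<n. \<zeta> i j * c j)"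
proof -
  have "integral {a..b} (Zfun n \<zeta> A i) = (\<Sum>j<n. \<zeta> i j * integral {a..b} (A j))"
    unfolding Zfun_def[abs_def] using assms(1)
    by (subst integral_sum) (auto intro!: integrable_continuous_interval continuous_on_mult_left)
  also have "\<dots> \<le> (\<Sum>j<n. \<zeta> i j * c j)" using assms(2,3) by (intro sum_mono mult_left_mono) auto
  finally show ?thesis .
qed

lemma solution_species:
  assumes AA: "assumptionA n muA muJ \<beta> \<zeta> f" and sol: "is_solution n muA muJ \<beta> \<zeta> f \<phi> \<tau>0 A \<tau>"
    and init: "integral {- \<tau>0 i..0} (\<lambda>\<sigma>. f i (Zfun n \<zeta> \<phi> i \<sigma>)) = 1"
    and \<tau>0: "0 \<le> \<tau>0 i" and i: "i < n"
  shows "species (f i) (Zfun n \<zeta> A i) (\<lambda>t. t - \<tau> i t) (\<tau>0 i) (A i) (muA i) (\<beta> i) (muJ i) (\<zeta> i i)"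
proof unfold_locales
  have A: "\<And>j. j < n \<Longrightarrow> continuous_on UNIV (A j)" "\<And>j t. j < n \<Longrightarrow> 0 \<le> A j t"
    "\<And>j t. j < n \<Longrightarrow> t \<le> 0 \<Longrightarrow> A j t = \<phi> j t"
    using sol unfolding is_solution_def by blast+
  have \<zeta>: "\<And>j. j < n \<Longrightarrow> 0 \<le> \<zeta> i j" using AA i unfolding assumptionA_def by blast
  show "continuous_on UNIV (\<lambda>\<sigma>. f i (Zfun n \<zeta> A i \<sigma>))"
    using A(1) by (intro continuous_on_compose2[OF assumptionA_continuous[OF AA i]] continuous_on_Zfun)
      auto
  show "0 < f i x" "(f i \<longlongrightarrow> 0) at_top" "0 < \<zeta> i i" "0 < muA i" "0 < \<beta> i" "0 < muJ i" for x
    using AA i unfolding assumptionA_def by auto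
  show "0 \<le> \<tau>0 i" by (rule \<tau>0)
  have "integral {- \<tau>0 i..0} (\<lambda>\<sigma>. f i (Zfun n \<zeta> A i \<sigma>))
      = integral {- \<tau>0 i..0} (\<lambda>\<sigma>. f i (Zfun n \<zeta> \<phi> i \<sigma>))"
    unfolding Zfun_def using A(3) by (intro integral_cong sum.cong refl) auto
  thus "integral {- \<tau>0 i..0} (\<lambda>\<sigma>. f i (Zfun n \<zeta> A i \<sigma>)) = 1" using init by simp
  show "t - \<tau> i t \<le> t \<and> integral {t - \<tau> i t..t} (\<lambda>\<sigma>. f i (Zfun n \<zeta> A i \<sigma>)) = 1" if "0 \<le> t" for t
    using sol i that init unfolding is_solution_def by auto
  show "\<zeta> i i * A i \<sigma> \<le> Zfun n \<zeta> A i \<sigma>" for \<sigma>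
    using \<zeta> A(2) i by (rule Zfun_ge_diagonal)
  show "continuous_on UNIV (A i)" "0 \<le> A i x" for x using A i by auto
  show "DERIV (A i) t :> - muA i * A i t + \<beta> i * exp (- muJ i * (t - (t - \<tau> i t))) *
      (f i (Zfun n \<zeta> A i t) / f i (Zfun n \<zeta> A i (t - \<tau> i t))) * A i (t - \<tau> i t)" if "0 < t" for t
  proof -
    have D: "\<forall>t\<ge>0. (A i has_real_derivative - muA i * A i t + \<beta> i * exp (- muJ i * \<tau> i t) *
        (f i (Zfun n \<zeta> A i t) / f i (Zfun n \<zeta> A i (t - \<tau> i t))) * A i (t - \<tau> i t))
        (at t within {0..})"
      using sol i unfolding is_solution_def by blast
    moreover have "at t within {0..} = at t" using that by (intro at_within_open_subset[of _ "{0<..}"]) auto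
    ultimately show ?thesis using D[rule_format, OF less_imp_le[OF that]] by simp
  qed
qed

theorem lemma4p1:
  fixes n :: nat and \<alpha> :: real
    and muA muJ \<beta> \<tau>0 :: "nat \<Rightarrow> real" and \<zeta> :: "nat \<Rightarrow> nat \<Rightarrow> real"
    and f \<phi> A \<tau> :: "nat \<Rightarrow> real \<Rightarrow> real"
  assumes "\<alpha> > 0"
    and "assumptionA n muA muJ \<beta> \<zeta> f"
    and "\<forall>i<n. \<phi> i \<in> X_alpha \<alpha> \<and> (\<forall>t\<le>0. \<phi> i t \<ge> 0) \<and> \<tau>0 i \<ge> 0"
    and "\<forall>i<n. integral {- \<tau>0 i..0} (\<lambda>\<sigma>. f i (Zfun n \<zeta> \<phi> i \<sigma>)) = 1"
    and "is_solution n muA muJ \<beta> \<zeta> f \<phi> \<tau>0 A \<tau>"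
  shows "\<forall>i<n. filterlim (\<lambda>t. t - \<tau> i t) at_top at_top"
proof (intro allI impI)
  fix i assume i: "i < n"
  have species: "species (f j) (Zfun n \<zeta> A j) (\<lambda>t. t - \<tau> j t) (\<tau>0 j) (A j) (muA j) (\<beta> j) (muJ j) (\<zeta> j j)"
    if "j < n" for j
    using assms(3,4) that by (intro solution_species[OF assms(2,5)]) auto
  have "\<forall>j\<in>{..<n}. \<exists>C. \<forall>T\<ge>0. integral {0..T} (A j) \<le> C * (1 + T)"
    using species species.integral_linear_bound by blast
  then obtain C where C: "\<forall>j\<in>{..<n}. \<forall>T\<ge>0. integral {0..T} (A j) \<le> C j * (1 + T)"
    by (auto dest: bchoice)
  have A: "\<And>j. j < n \<Longrightarrow> continuous_on UNIV (A j)" "\<And>j t. j < n \<Longrightarrow> 0 \<le> A j t"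
    using assms(5) unfolding is_solution_def by auto
  have \<zeta>: "\<And>j. j < n \<Longrightarrow> 0 \<le> \<zeta> i j" using assms(2) i unfolding assumptionA_def by blast
  have "integral {0..T} (Zfun n \<zeta> A i) \<le> (\<Sum>j<n. \<zeta> i j * C j) * (1 + T)" if "0 \<le> T" for T
    using integral_Zfun_le[of n 0 T A \<zeta> i "\<lambda>j. C j * (1 + T)"] A(1) \<zeta> C that
    by (auto simp: sum_distrib_right mult.assoc intro: continuous_on_subset)
  hence "filterlim (\<lambda>T. integral {0..T} (\<lambda>\<sigma>. f i (Zfun n \<zeta> A i \<sigma>))) at_top at_top"
  proof (rule filterlim_integral_antimono_comp[rotated 5])
    show "continuous_on UNIV (f i)" by (rule assumptionA_continuous[OF assms(2) i])
    show "f i y \<le> f i x" if "x \<le> y" for x y by (rule assumptionA_antimono[OF assms(2) i that])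
    show "0 < f i x" for x using assms(2) i unfolding assumptionA_def by blast
    show "continuous_on UNIV (Zfun n \<zeta> A i)" using A(1) by (rule continuous_on_Zfun)
    show "0 \<le> Zfun n \<zeta> A i x" for x using \<zeta> A(2) by (rule Zfun_nonneg)
  qed
  interpret S: species "f i" "Zfun n \<zeta> A i" "\<lambda>t. t - \<tau> i t" "\<tau>0 i" "A i" "muA i" "\<beta> i" "muJ i" "\<zeta> i i"
    by (rule species[OF i])
  show "filterlim (\<lambda>t. t - \<tau> i t) at_top at_top"
    by (rule filterlim_window_start[OF S.h_cont less_imp_le[OF S.h_pos] _ S.window]) fact
qed

end
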